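(* The Split Cycle VCCR satisfies Positive Involvement in Defeat: for every linear profile $\mathbf P$ and $x,y\in X(\mathbf P)$, if $(x,y)\notin sc(\mathbf P)$ and $\mathbf P'$ is obtained from $\mathbf P$ by adding one new voter whose ballot ranks $y$ above $x$, then $(x,y)\notin sc(\mathbf P')$.
   Context: Profiles: $\mathbf P:V\to\mathcal L(X)$, $V$ nonempty finite set of voters, $X=X(\mathbf P)$ nonempty finite set of candidates, $\mathcal L(X)$ strict linear orders. $\mathrm{Margin}_{\mathbf P}(x,y)$ = #voters ranking $x$ above $y$ minus #ranking $y$ above $x$. A majority path from $x_1$ to $x_n$ is $(x_1,\dots,x_n)$ with all $\mathrm{Margin}_{\mathbf P}(x_i,x_{i+1})>0$; its strength is the minimum of these margins. Split Cycle: $(x,y)\in sc(\mathbf P)$ iff $\mathrm{Margin}_{\mathbf P}(x,y)>0$ and it exceeds the strength of every majority path from $y$ to $x$. *)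

theory Defs
  imports Main
begin

text \<open>A ballot on candidate set X: a strict linear order on X (pair (a,b) means a ranked above b).\<close>
definition linear_ballot :: "'a set \<Rightarrow> ('a \<times> 'a) set \<Rightarrow> bool" where
  "linear_ballot X r \<longleftrightarrow> r \<subseteq> X \<times> X \<and> strict_linear_order_on X r"

definition profile :: "'v set \<Rightarrow> 'a set \<Rightarrow> ('v \<Rightarrow> ('a \<times> 'a) set) \<Rightarrow> bool" where
  "profile V X P \<longleftrightarrow> finite V \<and> V \<noteq> {} \<and> finite X \<and> X \<noteq> {} \<and> (\<forall>i\<in>V. linear_ballot X (P i))"

definition margin :: "'v set \<Rightarrow> ('v \<Rightarrow> ('a \<times> 'a) set) \<Rightarrow> 'a \<Rightarrow> 'a \<Rightarrow> int" where
  "margin V P x y = int (card {i\<in>V. (x,y) \<in> P i}) - int (card {i\<in>V. (y,x) \<in> P i})"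

definition majority_path :: "'v set \<Rightarrow> ('v \<Rightarrow> ('a \<times> 'a) set) \<Rightarrow> 'a list \<Rightarrow> bool" where
  "majority_path V P xs \<longleftrightarrow> length xs \<ge> 2 \<and>
     (\<forall>k < length xs - 1. margin V P (xs ! k) (xs ! Suc k) > 0)"

definition path_strength :: "'v set \<Rightarrow> ('v \<Rightarrow> ('a \<times> 'a) set) \<Rightarrow> 'a list \<Rightarrow> int" where
  "path_strength V P xs = Min {margin V P (xs ! k) (xs ! Suc k) | k. k < length xs - 1}"

definition split_cycle :: "'v set \<Rightarrow> 'a set \<Rightarrow> ('v \<Rightarrow> ('a \<times> 'a) set) \<Rightarrow> ('a \<times> 'a) set" where
  "split_cycle V X P = {(x,y). x \<in> X \<and> y \<in> X \<and> margin V P x y > 0 \<and>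
     (\<forall>xs. majority_path V P xs \<and> hd xs = y \<and> last xs = x \<longrightarrow>
            margin V P x y > path_strength V P xs)}"

end

theory Submission
  imports Defs
begin

text \<open>The new ballot ranks \<open>y\<close> above \<open>x\<close>, so it lowers \<open>Margin(x, y)\<close> by exactly one and
  lowers every other margin by at most one. A majority path from \<open>y\<close> to \<open>x\<close> that kept \<open>x\<close> from
  defeating \<open>y\<close> in \<open>P\<close> therefore survives in \<open>P'\<close>, with its strength still at least
  the new margin of \<open>x\<close> over \<open>y\<close>, and keeps blocking that defeat.\<close>

lemma linear_ballot_asym:
  assumes "linear_ballot X r" "(a, b) \<in> r"
  shows "(b, a) \<notin> r"
  using assms unfolding linear_ballot_def strict_linear_order_on_def trans_def irrefl_on_def
  by blast

lemma card_insert_voter: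
  assumes "finite V" "v \<notin> V" "\<forall>i\<in>V. P' i = P i"
  shows "int (card {i \<in> insert v V. q \<in> P' i}) =
           int (card {i \<in> V. q \<in> P i}) + (if q \<in> P' v then 1 else 0)"
proof -
  have old_voters: "{i \<in> V. q \<in> P' i} = {i \<in> V. q \<in> P i}"
    using assms(3) by auto
  show ?thesis
  proof (cases "q \<in> P' v")
    case True
    then have "{i \<in> insert v V. q \<in> P' i} = insert v {i \<in> V. q \<in> P' i}" by auto
    then show ?thesis using True old_voters assms(1,2) by simp
  next
    case False
    then have "{i \<in> insert v V. q \<in> P' i} = {i \<in> V. q \<in> P' i}" by auto
    then show ?thesis using False old_voters by simp
  qed
qed

lemma margin_insert_voter:
  assumes "finite V" "v \<notin> V" "\<forall>i\<in>V. P' i = P i"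
  shows "margin (insert v V) P' a b =
           margin V P a b + (if (a, b) \<in> P' v then 1 else 0) - (if (b, a) \<in> P' v then 1 else 0)"
  using card_insert_voter[OF assms, of "(a, b)"] card_insert_voter[OF assms, of "(b, a)"]
  unfolding margin_def by simp

lemma le_path_strength_iff:
  assumes "length xs \<ge> 2"
  shows "c \<le> path_strength V P xs \<longleftrightarrow>
           (\<forall>k < length xs - 1. c \<le> margin V P (xs ! k) (xs ! Suc k))"
proof -
  have "{margin V P (xs ! k) (xs ! Suc k) | k. k < length xs - 1} \<noteq> {}"
    using assms by (auto intro: exI[of _ 0])
  then show ?thesis
    unfolding path_strength_def by (subst Min_ge_iff) auto
qed

lemma not_in_split_cycleE:
  assumes "(x, y) \<notin> split_cycle V X P" "x \<in> X" "y \<in> X" "margin V P x y > 0"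
  obtains xs where "majority_path V P xs" "hd xs = y" "last xs = x"
    "margin V P x y \<le> path_strength V P xs"
  using assms unfolding split_cycle_def by fastforce

lemma not_in_split_cycleI:
  assumes "majority_path V P xs" "hd xs = y" "last xs = x"
    "margin V P x y \<le> path_strength V P xs"
  shows "(x, y) \<notin> split_cycle V X P"
  using assms unfolding split_cycle_def by auto

lemma not_in_split_cycle_transfer:
  assumes blocked: "(x, y) \<notin> split_cycle V X P" and "x \<in> X" "y \<in> X" and "0 \<le> d"
    and margin_xy: "margin W Q x y = margin V P x y - d"
    and margin_ge: "\<And>a b. margin V P a b - d \<le> margin W Q a b"
  shows "(x, y) \<notin> split_cycle W X Q"
proof (cases "margin W Q x y > 0")
  case True
  with \<open>0 \<le> d\<close> have "margin V P x y > 0"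
    using margin_xy by simp
  then obtain xs where path: "majority_path V P xs" and ends: "hd xs = y" "last xs = x"
    and strong: "margin V P x y \<le> path_strength V P xs"
    using not_in_split_cycleE[OF blocked \<open>x \<in> X\<close> \<open>y \<in> X\<close>] by blast
  have len: "length xs \<ge> 2"
    using path unfolding majority_path_def by simp
  have edges: "margin W Q x y \<le> margin W Q (xs ! k) (xs ! Suc k)" if "k < length xs - 1" for k
    using strong that margin_ge[of "xs ! k" "xs ! Suc k"] margin_xy
    unfolding le_path_strength_iff[OF len] by force
  have "majority_path W Q xs"
    unfolding majority_path_def using len edges True by (meson less_le_trans)
  moreover have "margin W Q x y \<le> path_strength W Q xs"
    unfolding le_path_strength_iff[OF len] using edges by blast
  ultimately show ?thesis
    using not_in_split_cycleI ends by metis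
next
  case False
  then show ?thesis unfolding split_cycle_def by auto
qed

theorem proposition3p14:
  fixes V :: "'v set" and X :: "'a set" and P P' :: "'v \<Rightarrow> ('a \<times> 'a) set"
    and v :: 'v and x y :: 'a
  assumes "profile V X P"
    and "x \<in> X" and "y \<in> X"
    and "(x, y) \<notin> split_cycle V X P"
    and "v \<notin> V"
    and "\<forall>i\<in>V. P' i = P i"
    and "linear_ballot X (P' v)"
    and "(y, x) \<in> P' v"
  shows "(x, y) \<notin> split_cycle (insert v V) X P'"
proof -
  have "finite V"
    using assms(1) unfolding profile_def by simp
  note margin' = margin_insert_voter[OF this assms(5,6)]
  have "(x, y) \<notin> P' v"
    using linear_ballot_asym[OF assms(7,8)] .
  then have "margin (insert v V) P' x y = margin V P x y - 1"
    using assms(8) margin' by simp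
  moreover have "margin V P a b - 1 \<le> margin (insert v V) P' a b" for a b
    using margin'[of a b] by simp
  ultimately show ?thesis
    by (intro not_in_split_cycle_transfer[OF assms(4,2,3), of 1]) simp_all
qed

end
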